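(* Let $P,Q$ be fixed probability distributions on $\mathbb{R}$ (not depending on $n$) such that $Q$ is absolutely continuous with respect to $P$, and let $k=k_n\in\{2,\dots,n\}$ be a sequence. If $R(T^* )\to 0$ as $n\to\infty$, then $k_n\to\infty$.
   Context: Weighted hidden clique model. For $n\ge 2$ and $k\in\{2,\dots,n\}$, let $E=\{(i,j):1\le i<j\le n\}$ and for $S\subseteq[n]$ let $E(S)=\{(i,j):i,j\in S,\ i<j\}$. The observation is $\mathbf{X}=(X_e)_{e\in E}$. Under $\mathcal{H}_0$ (law $\mathbb{P}_0$) the $X_e$ are i.i.d. $P$. Under $\mathcal{H}_1$ (law $\mathbb{P}_1$) a uniformly random $k$-subset $S^*\subseteq[n]$ is chosen and, conditionally on $S^*$, the $X_e$ are independent with $X_e\sim Q$ for $e\in E(S^* )$ and $X_e\sim P$ otherwise. The risk of a test $T:\mathbb{R}^{\binom n2}\to\{0,1\}$ is $R(T)=\mathbb{P}_0(T=1)+\mathbb{P}_1(T=0)$, and $R(T^* )=\inf_T R(T)$ is the optimal risk (attained by the likelihood ratio test $T^*$). *)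

theory Defs
  imports "HOL-Probability.Probability"
begin

definition hc_edges :: "nat \<Rightarrow> (nat \<times> nat) set" where
  "hc_edges n = {(i, j). 1 \<le> i \<and> i < j \<and> j \<le> n}"

definition hc_edges_of :: "nat set \<Rightarrow> (nat \<times> nat) set" where
  "hc_edges_of S = {(i, j). i \<in> S \<and> j \<in> S \<and> i < j}"

text \<open>The k-subsets of [n] (support of the uniform law of S*).\<close>
definition hc_subsets :: "nat \<Rightarrow> nat \<Rightarrow> nat set set" where
  "hc_subsets n k = {S. S \<subseteq> {1..n} \<and> card S = k}"

definition hc_null :: "real measure \<Rightarrow> nat \<Rightarrow> (nat \<times> nat \<Rightarrow> real) measure" where
  "hc_null P n = PiM (hc_edges n) (\<lambda>_. P)"

text \<open>Conditional law given S* = S: Q on E(S), P elsewhere.\<close>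
definition hc_planted ::
  "real measure \<Rightarrow> real measure \<Rightarrow> nat \<Rightarrow> nat set \<Rightarrow> (nat \<times> nat \<Rightarrow> real) measure" where
  "hc_planted P Q n S = PiM (hc_edges n) (\<lambda>e. if e \<in> hc_edges_of S then Q else P)"

text \<open>P_1(B): average over the uniformly random k-subset S* of the conditional laws.\<close>
definition hc_alt_prob ::
  "real measure \<Rightarrow> real measure \<Rightarrow> nat \<Rightarrow> nat \<Rightarrow> (nat \<times> nat \<Rightarrow> real) set \<Rightarrow> real" where
  "hc_alt_prob P Q n k B =
     (\<Sum>S\<in>hc_subsets n k. measure (hc_planted P Q n S) B) / real (card (hc_subsets n k))"

text \<open>Risk of a (measurable) test T (True = reject H0, i.e. T = 1):
  R(T) = P_0(T = 1) + P_1(T = 0).\<close>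
definition hc_risk ::
  "real measure \<Rightarrow> real measure \<Rightarrow> nat \<Rightarrow> nat \<Rightarrow> ((nat \<times> nat \<Rightarrow> real) \<Rightarrow> bool) \<Rightarrow> real" where
  "hc_risk P Q n k T =
     measure (hc_null P n) {x \<in> space (hc_null P n). T x}
     + hc_alt_prob P Q n k {x \<in> space (hc_null P n). \<not> T x}"

definition hc_opt_risk :: "real measure \<Rightarrow> real measure \<Rightarrow> nat \<Rightarrow> nat \<Rightarrow> real" where
  "hc_opt_risk P Q n k =
     (INF T \<in> measurable (hc_null P n) (count_space UNIV). hc_risk P Q n k T)"

end

theory Submission
  imports Defs
begin

text \<open>
  The overlap \<open>\<epsilon> = \<integral> min(dP, dQ)\<close> bounds from below the sum of the two error probabilities
  of any test of \<open>P\<close> against \<open>Q\<close>, and it is positive because \<open>Q \<ll> P\<close>. In the soft form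
  used below (arbitrary nonnegative \<open>F + G \<ge> d\<close> in place of a test and its complement),
  this bound tensorizes over product measures by Fubini. For a fixed clique \<open>S\<close>, the null
  and the planted law differ on at most \<open>k\<^sup>2\<close> coordinates, so every test has
  \<open>P\<^sub>0(T = 1) + P(T = 0 | S\<^sup>* = S) \<ge> \<epsilon>\<^bsup>k\<^sup>2\<^esup>\<close>; averaging over \<open>S\<close> gives
  \<open>R(T\<^sup>*) \<ge> \<epsilon>\<^bsup>k\<^sup>2\<^esup>\<close>. Hence \<open>R(T\<^sup>*) \<rightarrow> 0\<close> forces \<open>k\<^sub>n \<rightarrow> \<infinity>\<close>.
\<close>

lemma enn2real_power: "enn2real (x ^ n) = enn2real x ^ n"
  by (induction n) (simp_all add: enn2real_mult)

text \<open>
  With \<open>F\<close>, \<open>G\<close> the indicators of the rejection and acceptance regions of a test and \<open>d = 1\<close>,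
  this bounds the total error of the test by \<open>c\<close>. Functions rather than regions are needed
  for products: integrating out one coordinate turns indicators into general functions.
\<close>
definition error_sum_bound :: "ennreal \<Rightarrow> 'a measure \<Rightarrow> 'a measure \<Rightarrow> bool" where
  "error_sum_bound c M N \<longleftrightarrow>
     (\<forall>(F :: 'a \<Rightarrow> ennreal) G d. F \<in> borel_measurable M \<longrightarrow> G \<in> borel_measurable M \<longrightarrow>
        (\<forall>x\<in>space M. d \<le> F x + G x) \<longrightarrow> c * d \<le> integral\<^sup>N M F + integral\<^sup>N N G)"

lemma error_sum_boundI:
  assumes "\<And>(F :: 'a \<Rightarrow> ennreal) G d. F \<in> borel_measurable M \<Longrightarrow> G \<in> borel_measurable M \<Longrightarrow>
      (\<forall>x\<in>space M. d \<le> F x + G x) \<Longrightarrow> c * d \<le> integral\<^sup>N M F + integral\<^sup>N N G"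
  shows "error_sum_bound c M N"
  using assms unfolding error_sum_bound_def by blast

lemma error_sum_boundD:
  fixes F G :: "'a \<Rightarrow> ennreal"
  assumes "error_sum_bound c M N" "F \<in> borel_measurable M" "G \<in> borel_measurable M"
    "\<forall>x\<in>space M. d \<le> F x + G x"
  shows "c * d \<le> integral\<^sup>N M F + integral\<^sup>N N G"
  using assms unfolding error_sum_bound_def by blast

lemma error_sum_bound_mono:
  assumes "error_sum_bound c M N" "c' \<le> c"
  shows "error_sum_bound c' M N"
proof (rule error_sum_boundI)
  fix F G :: "'a \<Rightarrow> ennreal" and d :: ennreal
  assume "F \<in> borel_measurable M" "G \<in> borel_measurable M" "\<forall>x\<in>space M. d \<le> F x + G x"
  then have "c * d \<le> integral\<^sup>N M F + integral\<^sup>N N G" by (rule error_sum_boundD[OF assms(1)])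
  then show "c' * d \<le> integral\<^sup>N M F + integral\<^sup>N N G"
    using assms(2) by (meson mult_right_mono order_trans zero_le)
qed

lemma (in prob_space) error_sum_bound_self: "error_sum_bound 1 M M"
proof (rule error_sum_boundI)
  fix F G :: "'a \<Rightarrow> ennreal" and d :: ennreal
  assume F: "F \<in> borel_measurable M" and G: "G \<in> borel_measurable M"
    and FG: "\<forall>x\<in>space M. d \<le> F x + G x"
  have "(\<integral>\<^sup>+x. d \<partial>M) \<le> (\<integral>\<^sup>+x. F x + G x \<partial>M)"
    using FG by (intro nn_integral_mono) simp
  then have "d \<le> integral\<^sup>N M F + integral\<^sup>N M G"
    using F G by (simp add: nn_integral_add emeasure_space_1)
  then show "1 * d \<le> integral\<^sup>N M F + integral\<^sup>N M G" by simp
qed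

text \<open>For \<open>N \<ll> M\<close> this is \<open>\<integral> min(dM, dN)\<close>.\<close>
definition overlap :: "'a measure \<Rightarrow> 'a measure \<Rightarrow> ennreal" where
  "overlap P Q = (\<integral>\<^sup>+x. min 1 (RN_deriv P Q x) \<partial>P)"

lemma (in sigma_finite_measure) error_sum_bound_overlap:
  assumes "absolutely_continuous M N" "sets N = sets M"
  shows "error_sum_bound (overlap M N) M N"
proof (rule error_sum_boundI)
  fix F G :: "'a \<Rightarrow> ennreal" and d :: ennreal
  assume F: "F \<in> borel_measurable M" and G: "G \<in> borel_measurable M"
    and FG: "\<forall>x\<in>space M. d \<le> F x + G x"
  let ?g = "RN_deriv M N"
  have "overlap M N * d = (\<integral>\<^sup>+x. min 1 (?g x) * d \<partial>M)"
    by (simp add: overlap_def nn_integral_multc)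
  also have "\<dots> \<le> (\<integral>\<^sup>+x. F x + ?g x * G x \<partial>M)"
  proof (rule nn_integral_mono)
    fix x assume "x \<in> space M"
    then have "min 1 (?g x) * d \<le> min 1 (?g x) * F x + min 1 (?g x) * G x"
      using FG by (simp add: mult_left_mono flip: distrib_left)
    also have "\<dots> \<le> F x + ?g x * G x"
      by (intro add_mono mult_right_mono) (use mult_right_mono[of "min 1 (?g x)" 1 "F x"] in auto)
    finally show "min 1 (?g x) * d \<le> F x + ?g x * G x" .
  qed
  also have "\<dots> = integral\<^sup>N M F + integral\<^sup>N N G"
    using F G by (simp add: nn_integral_add RN_deriv_nn_integral[OF assms])
  finally show "overlap M N * d \<le> integral\<^sup>N M F + integral\<^sup>N N G" .
qed

lemma (in prob_space) overlap_le_1: "overlap M N \<le> 1"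
proof -
  have "overlap M N \<le> (\<integral>\<^sup>+x. 1 \<partial>M)"
    unfolding overlap_def by (intro nn_integral_mono) simp
  then show ?thesis by (simp add: emeasure_space_1)
qed

lemma (in sigma_finite_measure) overlap_pos:
  assumes "absolutely_continuous M N" "sets N = sets M" "emeasure N (space N) \<noteq> 0"
  shows "0 < overlap M N"
proof (rule ccontr)
  assume "\<not> 0 < overlap M N"
  then have "AE x in M. min 1 (RN_deriv M N x) = 0"
    by (simp add: overlap_def nn_integral_0_iff_AE)
  then have "AE x in M. RN_deriv M N x * 1 = 0"
    by eventually_elim (simp add: min_def split: if_splits)
  then have "(\<integral>\<^sup>+x. RN_deriv M N x * 1 \<partial>M) = 0"
    by (simp add: nn_integral_0_iff_AE)
  then have "(\<integral>\<^sup>+x. 1 \<partial>N) = 0"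
    by (simp only: RN_deriv_nn_integral[OF assms(1,2)] borel_measurable_const)
  with assms(3) show False by simp
qed

lemma enn2real_overlap_pos:
  assumes "prob_space M" "prob_space N" "sets N = sets M" "absolutely_continuous M N"
  shows "0 < enn2real (overlap M N)"
proof -
  interpret M: prob_space M by fact
  have "overlap M N < \<top>"
    using M.overlap_le_1 ennreal_one_less_top by (rule le_less_trans)
  moreover have "0 < overlap M N"
    using prob_space.emeasure_space_1[OF assms(2)] by (intro M.overlap_pos assms(3,4)) simp
  ultimately show ?thesis by (simp add: enn2real_positive_iff)
qed

lemma error_sum_bound_PiM:
  assumes "finite I"
    and M: "\<And>i. sigma_finite_measure (M i)" and N: "\<And>i. sigma_finite_measure (N i)"
    and sets_eq: "\<And>i. sets (N i) = sets (M i)"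
    and bound: "\<And>i. i \<in> I \<Longrightarrow> error_sum_bound (c i) (M i) (N i)"
  shows "error_sum_bound (\<Prod>i\<in>I. c i) (PiM I M) (PiM I N)"
  using assms(1) bound
proof (induction I rule: finite_induct)
  case empty
  show ?case
  proof (rule error_sum_boundI)
    fix F G :: "_ \<Rightarrow> ennreal" and d :: ennreal
    assume "\<forall>x\<in>space (PiM {} M). d \<le> F x + G x"
    then show "(\<Prod>i\<in>{}. c i) * d \<le> integral\<^sup>N (PiM {} M) F + integral\<^sup>N (PiM {} N) G"
      by (simp add: PiM_empty nn_integral_count_space_finite)
  qed
next
  case (insert i I)
  interpret M: product_sigma_finite M
    by (simp add: product_sigma_finite_def M)
  interpret N: product_sigma_finite N
    by (simp add: product_sigma_finite_def N)
  have sets_PiM_eq: "sets (PiM J N) = sets (PiM J M)" for J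
    by (rule sets_PiM_cong) (auto simp: sets_eq)
  have space_PiM_eq: "space (PiM J N) = space (PiM J M)" for J
    using sets_eq_imp_space_eq[OF sets_PiM_eq] .
  show ?case
  proof (rule error_sum_boundI)
    fix F G :: "_ \<Rightarrow> ennreal" and d :: ennreal
    assume F[measurable]: "F \<in> borel_measurable (PiM (insert i I) M)"
      and G: "G \<in> borel_measurable (PiM (insert i I) M)"
      and FG: "\<forall>x\<in>space (PiM (insert i I) M). d \<le> F x + G x"
    have [measurable]: "G \<in> borel_measurable (PiM (insert i I) N)"
      using G by (simp add: measurable_cong_sets[OF sets_PiM_eq refl])
    define F' where "F' x = (\<integral>\<^sup>+ y. F (x(i := y)) \<partial>M i)" for x
    define G' where "G' x = (\<integral>\<^sup>+ y. G (x(i := y)) \<partial>N i)" for x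
    have "F' \<in> borel_measurable (PiM I M)"
      unfolding F'_def by measurable
    moreover have "G' \<in> borel_measurable (PiM I N)"
      unfolding G'_def by measurable
    then have "G' \<in> borel_measurable (PiM I M)"
      by (simp add: measurable_cong_sets[OF sets_PiM_eq refl])
    moreover have "\<forall>x\<in>space (PiM I M). c i * d \<le> F' x + G' x"
    proof
      fix x assume x: "x \<in> space (PiM I M)"
      have upd_M: "(\<lambda>y. x(i := y)) \<in> measurable (M i) (PiM (insert i I) M)"
        using x insert.hyps(2) by (rule measurable_component_update)
      have "(\<lambda>y. x(i := y)) \<in> measurable (N i) (PiM (insert i I) N)"
        using x insert.hyps(2) by (intro measurable_component_update) (simp add: space_PiM_eq)
      then have "(\<lambda>y. G (x(i := y))) \<in> borel_measurable (M i)"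
        by (simp add: measurable_cong_sets[OF sets_eq[symmetric] refl])
      moreover have "(\<lambda>y. F (x(i := y))) \<in> borel_measurable (M i)"
        using upd_M by simp
      moreover have "\<forall>y\<in>space (M i). d \<le> F (x(i := y)) + G (x(i := y))"
        using FG measurable_space[OF upd_M] by auto
      ultimately show "c i * d \<le> F' x + G' x"
        unfolding F'_def G'_def by (intro error_sum_boundD[OF insert.prems]) auto
    qed
    ultimately have "(\<Prod>j\<in>I. c j) * (c i * d) \<le> integral\<^sup>N (PiM I M) F' + integral\<^sup>N (PiM I N) G'"
      using insert.IH insert.prems by (intro error_sum_boundD) auto
    also have "\<dots> = integral\<^sup>N (PiM (insert i I) M) F + integral\<^sup>N (PiM (insert i I) N) G"
      unfolding F'_def G'_def
      using insert.hyps by (simp add: M.product_nn_integral_insert N.product_nn_integral_insert)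
    finally show "(\<Prod>j\<in>insert i I. c j) * d \<le> integral\<^sup>N (PiM (insert i I) M) F + integral\<^sup>N (PiM (insert i I) N) G"
      using insert.hyps by (simp add: mult.assoc mult.left_commute)
  qed
qed

lemma error_sum_bound_measure:
  assumes "error_sum_bound c M N" "finite_measure M" "finite_measure N"
    and "sets N = sets M" "A \<in> sets M"
  shows "enn2real c \<le> measure M A + measure N (space M - A)"
proof -
  have "c * 1 \<le> integral\<^sup>N M (indicator A) + integral\<^sup>N N (indicator (space M - A))"
    using assms(5) by (intro error_sum_boundD[OF assms(1)]) (auto simp: indicator_def)
  also have "\<dots> = ennreal (measure M A + measure N (space M - A))"
    using assms(2-5)
    by (simp add: finite_measure.emeasure_eq_measure ennreal_plus)
  finally show ?thesis by (simp add: enn2real_leI)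
qed

lemma finite_hc_edges: "finite (hc_edges n)"
  unfolding hc_edges_def by (rule finite_subset[of _ "{1..n} \<times> {1..n}"]) auto

lemma hc_edges_of_subset: "hc_edges_of S \<subseteq> S \<times> S"
  unfolding hc_edges_of_def by auto

lemma card_hc_edges_of_le:
  assumes "finite S"
  shows "card (hc_edges_of S) \<le> card S ^ 2"
proof -
  have "card (hc_edges_of S) \<le> card (S \<times> S)"
    using assms hc_edges_of_subset by (intro card_mono) auto
  then show ?thesis by (simp add: card_cartesian_product power2_eq_square)
qed

lemma hc_planted_error_sum_bound:
  assumes P: "prob_space P" and Q: "prob_space Q" and "sets Q = sets P"
    and "absolutely_continuous P Q" and S: "S \<in> hc_subsets n k"
  shows "error_sum_bound (overlap P Q ^ k\<^sup>2) (hc_null P n) (hc_planted P Q n S)"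
proof -
  interpret P: prob_space P by (fact P)
  let ?c = "\<lambda>e. if e \<in> hc_edges_of S then overlap P Q else 1"
  have "error_sum_bound (\<Prod>e\<in>hc_edges n. ?c e) (hc_null P n) (hc_planted P Q n S)"
    unfolding hc_null_def hc_planted_def
    using P Q assms(3,4) finite_hc_edges P.error_sum_bound_overlap P.error_sum_bound_self
    by (intro error_sum_bound_PiM) (auto simp: prob_space_imp_sigma_finite)
  moreover have "overlap P Q ^ k\<^sup>2 \<le> (\<Prod>e\<in>hc_edges n. ?c e)"
  proof -
    have "finite S" "card S = k"
      using S by (auto simp: hc_subsets_def intro: finite_subset)
    then have "card (hc_edges n \<inter> hc_edges_of S) \<le> k\<^sup>2"
      using card_hc_edges_of_le[of S] finite_subset[OF hc_edges_of_subset]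
      by (metis card_mono finite_SigmaI inf_le2 le_trans)
    then show ?thesis
      using finite_hc_edges P.overlap_le_1
      by (simp add: prod.If_cases Int_def power_decreasing)
  qed
  ultimately show ?thesis by (rule error_sum_bound_mono)
qed

lemma finite_hc_subsets: "finite (hc_subsets n k)"
  unfolding hc_subsets_def by (rule finite_subset[of _ "Pow {1..n}"]) auto

lemma hc_subsets_nonempty: "k \<le> n \<Longrightarrow> hc_subsets n k \<noteq> {}"
  unfolding hc_subsets_def by (auto intro!: exI[of _ "{1..k}"])

lemma overlap_power_le_hc_risk:
  assumes P: "prob_space P" and Q: "prob_space Q" and "sets Q = sets P"
    and "absolutely_continuous P Q" and "k \<le> n"
    and T: "T \<in> measurable (hc_null P n) (count_space UNIV)"
  shows "enn2real (overlap P Q) ^ k\<^sup>2 \<le> hc_risk P Q n k T"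
proof -
  let ?\<delta> = "enn2real (overlap P Q) ^ k\<^sup>2"
  let ?A = "{x \<in> space (hc_null P n). T x}"
  let ?\<SS> = "hc_subsets n k"
  have A: "?A \<in> sets (hc_null P n)"
    using measurable_sets[OF T, of "{True}"] by (simp add: vimage_def Int_def conj_commute)
  have complement: "{x \<in> space (hc_null P n). \<not> T x} = space (hc_null P n) - ?A"
    by auto
  have per_subset: "?\<delta> \<le> measure (hc_null P n) ?A + measure (hc_planted P Q n S) (space (hc_null P n) - ?A)"
    if "S \<in> ?\<SS>" for S
  proof -
    have "prob_space (hc_null P n)" "prob_space (hc_planted P Q n S)"
      unfolding hc_null_def hc_planted_def using P Q finite_hc_edges by (auto intro!: prob_space_PiM)
    moreover have "sets (hc_planted P Q n S) = sets (hc_null P n)"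
      unfolding hc_planted_def hc_null_def using assms(3) by (intro sets_PiM_cong) auto
    ultimately show ?thesis
      using hc_planted_error_sum_bound[OF P Q assms(3,4) that] A
      by (subst enn2real_power[symmetric])
         (intro error_sum_bound_measure prob_space.finite_measure)
  qed
  have "real (card ?\<SS>) * ?\<delta> = (\<Sum>S\<in>?\<SS>. ?\<delta>)"
    by simp
  also have "\<dots> \<le> (\<Sum>S\<in>?\<SS>. measure (hc_null P n) ?A
      + measure (hc_planted P Q n S) (space (hc_null P n) - ?A))"
    by (rule sum_mono) (rule per_subset)
  also have "\<dots> = real (card ?\<SS>) * measure (hc_null P n) ?A
      + (\<Sum>S\<in>?\<SS>. measure (hc_planted P Q n S) (space (hc_null P n) - ?A))"
    by (simp add: sum.distrib)
  finally have "real (card ?\<SS>) * ?\<delta> \<le> \<dots>" .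
  moreover have "0 < real (card ?\<SS>)"
    using finite_hc_subsets hc_subsets_nonempty[OF assms(5)] by (simp add: card_gt_0_iff)
  ultimately show ?thesis
    unfolding hc_risk_def hc_alt_prob_def complement by (simp add: field_simps)
qed

lemma overlap_power_le_hc_opt_risk:
  assumes "prob_space P" "prob_space Q" "sets Q = sets P"
    and "absolutely_continuous P Q" "k \<le> n"
  shows "enn2real (overlap P Q) ^ k\<^sup>2 \<le> hc_opt_risk P Q n k"
proof -
  have "\<exists>T. T \<in> measurable (hc_null P n) (count_space UNIV)"
    by (rule exI, rule measurable_const) simp
  then show ?thesis
    unfolding hc_opt_risk_def ex_in_conv by (rule cINF_greatest) (rule overlap_power_le_hc_risk[OF assms])
qed

lemma filterlim_at_top_if_power_tendsto_0:
  fixes \<delta> :: real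
  assumes "0 < \<delta>" and "((\<lambda>x. \<delta> ^ f x) \<longlongrightarrow> 0) F"
  shows "filterlim f at_top F"
  unfolding filterlim_at_top
proof
  fix K
  have "\<forall>\<^sub>F x in F. \<delta> ^ f x < min 1 (\<delta> ^ K)"
    using assms by (intro order_tendstoD(2)) auto
  then show "\<forall>\<^sub>F x in F. K \<le> f x"
  proof eventually_elim
    case (elim x)
    have "\<delta> < 1"
    proof (rule ccontr)
      assume "\<not> \<delta> < 1"
      then have "1 \<le> \<delta> ^ f x" by (simp add: one_le_power)
      with elim show False by simp
    qed
    with elim assms(1) show ?case by simp
  qed
qed

lemma filterlim_at_top_if_power2:
  fixes f :: "'a \<Rightarrow> nat"
  assumes "filterlim (\<lambda>x. (f x)\<^sup>2) at_top F"
  shows "filterlim f at_top F"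
  unfolding filterlim_at_top
proof
  fix K
  have "\<forall>\<^sub>F x in F. K\<^sup>2 \<le> (f x)\<^sup>2"
    using assms unfolding filterlim_at_top by (rule spec)
  then show "\<forall>\<^sub>F x in F. K \<le> f x"
    by eventually_elim (rule power2_le_imp_le, simp_all)
qed

theorem mainTheorem2:
  fixes P Q :: "real measure" and k :: "nat \<Rightarrow> nat"
  assumes "prob_space P" and "prob_space Q"
    and "sets P = sets borel" and "sets Q = sets borel"
    and "absolutely_continuous P Q"
    and "\<And>n. n \<ge> 2 \<Longrightarrow> 2 \<le> k n \<and> k n \<le> n"
    and "(\<lambda>n. hc_opt_risk P Q n (k n)) \<longlonglongrightarrow> 0"
  shows "filterlim k at_top sequentially"
proof -
  have sets_eq: "sets Q = sets P" using assms(3,4) by simp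
  define \<delta> where "\<delta> = enn2real (overlap P Q)"
  have "0 < \<delta>"
    unfolding \<delta>_def using assms(1,2) sets_eq assms(5) by (rule enn2real_overlap_pos)
  have "\<forall>\<^sub>F n in sequentially. \<delta> ^ (k n)\<^sup>2 \<le> hc_opt_risk P Q n (k n)"
    using eventually_ge_at_top[of 2]
  proof eventually_elim
    case (elim n)
    then show ?case
      unfolding \<delta>_def using assms(6)[OF elim] by (intro overlap_power_le_hc_opt_risk assms(1,2,5) sets_eq) simp
  qed
  then have "(\<lambda>n. \<delta> ^ (k n)\<^sup>2) \<longlonglongrightarrow> 0"
    using \<open>0 < \<delta>\<close> by (intro tendsto_sandwich[OF _ _ tendsto_const assms(7)]) auto
  with \<open>0 < \<delta>\<close> have "filterlim (\<lambda>n. (k n)\<^sup>2) at_top sequentially"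
    by (rule filterlim_at_top_if_power_tendsto_0)
  then show ?thesis
    by (rule filterlim_at_top_if_power2)
qed

end
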